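(* Let $A$ be an associative algebra, $M$ an $A$-bimodule, and let $\{ T_\alpha : M \to A \}_{\alpha \in \Omega}$ and $\{ S_\alpha : M \to A \}_{\alpha \in \Omega}$ be two compatible $\mathcal{O}$-operator families. If the family $\{S_\alpha\}$ is invertible (each $S_\alpha$ is a linear isomorphism), then $\{ N_\alpha = T_{\alpha} \circ S_{\alpha}^{-1} : A \to A \}_{\alpha \in \Omega}$ is a Nijenhuis family on $A$. Likewise, if $\{T_\alpha\}$ is invertible, then $\{ N_\alpha = S_{\alpha} \circ T_{\alpha}^{-1} \}_{\alpha \in \Omega}$ is a Nijenhuis family on $A$.
   Context: $\Omega$ is a semigroup, $\mathbf{k}$ a field of characteristic $0$. An $\mathcal{O}$-operator family is a collection of linear maps $T_\alpha:M\to A$ with $T_\alpha(u) \cdot T_\beta(v) = T_{\alpha\beta}(T_\alpha(u) \cdot v + u \cdot T_\beta(v))$ for all $u,v\in M$, $\alpha,\beta\in\Omega$. Two $\mathcal{O}$-operator families $\{T_\alpha\},\{S_\alpha\}$ are compatible if $\{\lambda T_\alpha+\eta S_\alpha\}_{\alpha}$ is an $\mathcal{O}$-operator family for all $\lambda,\eta\in\mathbf{k}$. A Nijenhuis family is a collection of linear maps $N_\alpha:A\to A$ with $N_\alpha(a) \cdot N_\beta(b) = N_{\alpha \beta} \big( N_\alpha (a) \cdot b + a \cdot N_\beta(b) - N_{\alpha \beta}(a \cdot b) \big)$. *)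

theory Defs
  imports Complex_Main
begin

definition assoc_algebra :: "('k::field \<Rightarrow> 'a::ring \<Rightarrow> 'a) \<Rightarrow> bool" where
  "assoc_algebra sA \<longleftrightarrow> vector_space sA \<and>
     (\<forall>c a b. sA c (a * b) = sA c a * b \<and> sA c (a * b) = a * sA c b)"

definition bimodule ::
  "('k::field \<Rightarrow> 'a::ring \<Rightarrow> 'a) \<Rightarrow> ('k \<Rightarrow> 'm::ab_group_add \<Rightarrow> 'm)
   \<Rightarrow> ('a \<Rightarrow> 'm \<Rightarrow> 'm) \<Rightarrow> ('m \<Rightarrow> 'a \<Rightarrow> 'm) \<Rightarrow> bool" where
  "bimodule sA sM l r \<longleftrightarrow> vector_space sM \<and>
     (\<forall>a b m. l (a + b) m = l a m + l b m) \<and>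
     (\<forall>a m n. l a (m + n) = l a m + l a n) \<and>
     (\<forall>a m b. r m (a + b) = r m a + r m b) \<and>
     (\<forall>a m n. r (m + n) a = r m a + r n a) \<and>
     (\<forall>c a m. l (sA c a) m = sM c (l a m) \<and> l a (sM c m) = sM c (l a m)) \<and>
     (\<forall>c a m. r m (sA c a) = sM c (r m a) \<and> r (sM c m) a = sM c (r m a)) \<and>
     (\<forall>a b m. l (a * b) m = l a (l b m)) \<and>
     (\<forall>a b m. r m (a * b) = r (r m a) b) \<and>
     (\<forall>a b m. l a (r m b) = r (l a m) b)"

definition O_operator_family ::
  "('k::field \<Rightarrow> 'a::ring \<Rightarrow> 'a) \<Rightarrow> ('k \<Rightarrow> 'm::ab_group_add \<Rightarrow> 'm)
   \<Rightarrow> ('a \<Rightarrow> 'm \<Rightarrow> 'm) \<Rightarrow> ('m \<Rightarrow> 'a \<Rightarrow> 'm)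
   \<Rightarrow> ('w::semigroup_mult \<Rightarrow> 'm \<Rightarrow> 'a) \<Rightarrow> bool" where
  "O_operator_family sA sM l r T \<longleftrightarrow>
     (\<forall>\<alpha>. Vector_Spaces.linear sM sA (T \<alpha>)) \<and>
     (\<forall>u v \<alpha> \<beta>. T \<alpha> u * T \<beta> v = T (\<alpha> * \<beta>) (l (T \<alpha> u) v + r u (T \<beta> v)))"

definition compatible_O_operator_families ::
  "('k::field \<Rightarrow> 'a::ring \<Rightarrow> 'a) \<Rightarrow> ('k \<Rightarrow> 'm::ab_group_add \<Rightarrow> 'm)
   \<Rightarrow> ('a \<Rightarrow> 'm \<Rightarrow> 'm) \<Rightarrow> ('m \<Rightarrow> 'a \<Rightarrow> 'm)
   \<Rightarrow> ('w::semigroup_mult \<Rightarrow> 'm \<Rightarrow> 'a) \<Rightarrow> ('w \<Rightarrow> 'm \<Rightarrow> 'a) \<Rightarrow> bool" where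
  "compatible_O_operator_families sA sM l r T S \<longleftrightarrow>
     O_operator_family sA sM l r T \<and> O_operator_family sA sM l r S \<and>
     (\<forall>c d. O_operator_family sA sM l r (\<lambda>\<alpha> u. sA c (T \<alpha> u) + sA d (S \<alpha> u)))"

definition Nijenhuis_family ::
  "('k::field \<Rightarrow> 'a::ring \<Rightarrow> 'a) \<Rightarrow> ('w::semigroup_mult \<Rightarrow> 'a \<Rightarrow> 'a) \<Rightarrow> bool" where
  "Nijenhuis_family sA N \<longleftrightarrow>
     (\<forall>\<alpha>. Vector_Spaces.linear sA sA (N \<alpha>)) \<and>
     (\<forall>a b \<alpha> \<beta>. N \<alpha> a * N \<beta> b =
        N (\<alpha> * \<beta>) (N \<alpha> a * b + a * N \<beta> b - N (\<alpha> * \<beta>) (a * b)))"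

end

theory Submission
  imports Defs
begin

text \<open>Put \<open>a = S\<^sub>\<alpha> u\<close>, \<open>b = S\<^sub>\<beta> v\<close> and \<open>N = T \<circ> S\<inverse>\<close>. Cancelling the \<open>\<O>\<close>-operator identities
of \<open>T\<close> and \<open>S\<close> from that of \<open>T + S\<close> leaves the cross identity
\<open>T\<^sub>\<alpha>(u) S\<^sub>\<beta>(v) + S\<^sub>\<alpha>(u) T\<^sub>\<beta>(v) = T\<^sub>\<alpha>\<^sub>\<beta>(S\<^sub>\<alpha>(u) v + u S\<^sub>\<beta>(v)) + S\<^sub>\<alpha>\<^sub>\<beta>(T\<^sub>\<alpha>(u) v + u T\<^sub>\<beta>(v))\<close>,
whose left side is \<open>N\<^sub>\<alpha>(a) b + a N\<^sub>\<beta>(b)\<close> and whose first summand on the right is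
\<open>N\<^sub>\<alpha>\<^sub>\<beta>(ab)\<close>. Hence the argument of \<open>N\<^sub>\<alpha>\<^sub>\<beta>\<close> in the Nijenhuis identity is
\<open>S\<^sub>\<alpha>\<^sub>\<beta>(T\<^sub>\<alpha>(u) v + u T\<^sub>\<beta>(v))\<close>, which \<open>N\<^sub>\<alpha>\<^sub>\<beta>\<close> maps to \<open>T\<^sub>\<alpha>(u) T\<^sub>\<beta>(v) = N\<^sub>\<alpha>(a) N\<^sub>\<beta>(b)\<close>.
Only the case \<open>\<lambda> = \<eta> = 1\<close> of compatibility is needed, and compatibility is symmetric
in \<open>T\<close> and \<open>S\<close>.\<close>

lemma bij_linear_imp_inv_linear:
  assumes lin: "Vector_Spaces.linear s1 s2 f" and bij: "bij f"
  shows "Vector_Spaces.linear s2 s1 (inv f)"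
proof -
  have f_inv: "f (inv f y) = y" for y
    using bij by (simp add: bij_is_surj surj_f_inv_f)
  have inv_f: "inv f (f x) = x" for x
    using bij by (simp add: bij_is_inj)
  have add: "f (x + y) = f x + f y" and scale: "f (s1 c x) = s2 c (f x)" for x y c
    using lin by (auto simp: Vector_Spaces.linear_iff)
  have "inv f (x + y) = inv f x + inv f y" for x y
    by (metis add f_inv inv_f)
  moreover have "inv f (s2 c x) = s1 c (inv f x)" for c x
    by (metis scale f_inv inv_f)
  ultimately show ?thesis
    using lin by (auto simp: Vector_Spaces.linear_iff)
qed

lemma compatible_O_operator_families_sym:
  assumes "compatible_O_operator_families sA sM l r T S"
  shows "compatible_O_operator_families sA sM l r S T"
proof -
  have swap: "(\<lambda>\<alpha> u. sA c (S \<alpha> u) + sA d (T \<alpha> u)) = (\<lambda>\<alpha> u. sA d (T \<alpha> u) + sA c (S \<alpha> u))"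
    for c d
    by (simp add: add.commute)
  show ?thesis
    using assms unfolding compatible_O_operator_families_def swap by blast
qed

lemma compatible_O_operator_families_cross:
  assumes bimod: "bimodule sA sM l r"
    and compat: "compatible_O_operator_families sA sM l r T S"
  shows "T \<alpha> u * S \<beta> v + S \<alpha> u * T \<beta> v =
    T (\<alpha> * \<beta>) (l (S \<alpha> u) v + r u (S \<beta> v)) + S (\<alpha> * \<beta>) (l (T \<alpha> u) v + r u (T \<beta> v))"
proof -
  have OT: "O_operator_family sA sM l r T" and OS: "O_operator_family sA sM l r S"
    and OTS: "O_operator_family sA sM l r (\<lambda>\<alpha> u. sA 1 (T \<alpha> u) + sA 1 (S \<alpha> u))"
    using compat unfolding compatible_O_operator_families_def by auto
  have "vector_space sA"
    using OT by (auto simp: O_operator_family_def Vector_Spaces.linear_iff)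
  then have scale_one: "sA 1 x = x" for x
    by (simp add: vector_space_def)
  have T_add: "T \<gamma> (x + y) = T \<gamma> x + T \<gamma> y" and S_add: "S \<gamma> (x + y) = S \<gamma> x + S \<gamma> y" for \<gamma> x y
    using OT OS by (auto simp: O_operator_family_def Vector_Spaces.linear_iff)
  have l_add: "l (a + b) m = l a m + l b m" and r_add: "r m (a + b) = r m a + r m b" for a b m
    using bimod unfolding bimodule_def by auto
  let ?Tu = "T \<alpha> u" and ?Su = "S \<alpha> u" and ?Tv = "T \<beta> v" and ?Sv = "S \<beta> v"
  have T_eq: "?Tu * ?Tv = T (\<alpha> * \<beta>) (l ?Tu v + r u ?Tv)"
    and S_eq: "?Su * ?Sv = S (\<alpha> * \<beta>) (l ?Su v + r u ?Sv)"
    using OT OS unfolding O_operator_family_def by blast+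
  have TS_eq: "(?Tu + ?Su) * (?Tv + ?Sv) = T (\<alpha> * \<beta>) (l (?Tu + ?Su) v + r u (?Tv + ?Sv))
                 + S (\<alpha> * \<beta>) (l (?Tu + ?Su) v + r u (?Tv + ?Sv))"
    using OTS unfolding O_operator_family_def scale_one by blast
  have "?Tu * ?Tv + ?Su * ?Sv + (?Tu * ?Sv + ?Su * ?Tv) = (?Tu + ?Su) * (?Tv + ?Sv)"
    by (simp add: algebra_simps)
  also have "\<dots> = T (\<alpha> * \<beta>) (l ?Tu v + r u ?Tv) + S (\<alpha> * \<beta>) (l ?Su v + r u ?Sv)
      + (T (\<alpha> * \<beta>) (l ?Su v + r u ?Sv) + S (\<alpha> * \<beta>) (l ?Tu v + r u ?Tv))"
    unfolding TS_eq by (simp add: l_add r_add T_add S_add algebra_simps)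
  also have "\<dots> = ?Tu * ?Tv + ?Su * ?Sv
      + (T (\<alpha> * \<beta>) (l ?Su v + r u ?Sv) + S (\<alpha> * \<beta>) (l ?Tu v + r u ?Tv))"
    unfolding T_eq S_eq ..
  finally show ?thesis
    by simp
qed

lemma Nijenhuis_family_comp_inv:
  assumes bimod: "bimodule sA sM l r"
    and compat: "compatible_O_operator_families sA sM l r T S"
    and bij: "\<forall>\<alpha>. bij (S \<alpha>)"
  shows "Nijenhuis_family sA (\<lambda>\<alpha>. T \<alpha> \<circ> inv (S \<alpha>))"
proof -
  have OT: "O_operator_family sA sM l r T" and OS: "O_operator_family sA sM l r S"
    using compat unfolding compatible_O_operator_families_def by auto
  have S_inv: "S \<gamma> (inv (S \<gamma>) y) = y" for \<gamma> y
    using bij by (simp add: bij_is_surj surj_f_inv_f)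
  have inv_S: "inv (S \<gamma>) (S \<gamma> x) = x" for \<gamma> x
    using bij by (simp add: bij_is_inj)
  have "Vector_Spaces.linear sA sA (T \<alpha> \<circ> inv (S \<alpha>))" for \<alpha>
    using OT OS bij unfolding O_operator_family_def
    by (metis Vector_Spaces.linear_compose bij_linear_imp_inv_linear)
  moreover have "T \<alpha> (inv (S \<alpha>) a) * T \<beta> (inv (S \<beta>) b) =
      T (\<alpha> * \<beta>) (inv (S (\<alpha> * \<beta>)) (T \<alpha> (inv (S \<alpha>) a) * b + a * T \<beta> (inv (S \<beta>) b)
        - T (\<alpha> * \<beta>) (inv (S (\<alpha> * \<beta>)) (a * b))))" for a b \<alpha> \<beta>
  proof -
    obtain u v where a: "a = S \<alpha> u" and b: "b = S \<beta> v"
      using S_inv[of \<alpha> a] S_inv[of \<beta> b] by metis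
    have "T \<alpha> u * S \<beta> v + S \<alpha> u * T \<beta> v - T (\<alpha> * \<beta>) (inv (S (\<alpha> * \<beta>)) (S \<alpha> u * S \<beta> v))
        = S (\<alpha> * \<beta>) (l (T \<alpha> u) v + r u (T \<beta> v))"
      using OS by (simp add: O_operator_family_def inv_S compatible_O_operator_families_cross[OF bimod compat])
    then show ?thesis
      using OT by (simp add: a b inv_S O_operator_family_def)
  qed
  ultimately show ?thesis
    unfolding Nijenhuis_family_def by simp
qed

theorem proposition2p10:
  fixes sA :: "'k::field_char_0 \<Rightarrow> 'a::ring \<Rightarrow> 'a"
    and sM :: "'k \<Rightarrow> 'm::ab_group_add \<Rightarrow> 'm"
    and l :: "'a \<Rightarrow> 'm \<Rightarrow> 'm" and r :: "'m \<Rightarrow> 'a \<Rightarrow> 'm"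
    and T S :: "'w::semigroup_mult \<Rightarrow> 'm \<Rightarrow> 'a"
  assumes "assoc_algebra sA"
    and "bimodule sA sM l r"
    and "compatible_O_operator_families sA sM l r T S"
  shows "((\<forall>\<alpha>. bij (S \<alpha>)) \<longrightarrow> Nijenhuis_family sA (\<lambda>\<alpha>. T \<alpha> \<circ> inv (S \<alpha>)))
       \<and> ((\<forall>\<alpha>. bij (T \<alpha>)) \<longrightarrow> Nijenhuis_family sA (\<lambda>\<alpha>. S \<alpha> \<circ> inv (T \<alpha>)))"
  using Nijenhuis_family_comp_inv[OF assms(2,3)]
    Nijenhuis_family_comp_inv[OF assms(2) compatible_O_operator_families_sym[OF assms(3)]]
  by blast

end
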